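(* Let $R$, $G$, $*$, $\sigma$ and $\mathcal{S}$ be as in the context, and suppose $\mathcal{S}$ is anticommutative. For all $x,y\in G\setminus G_*$: - (i) $xy\in\{yx,\ yx^*,\ y^*x,\ x^*y^*\}$; - (ii) $xy=yx$ if and only if $xy\in G_*$; - (iii) $xy=yx^*$ if and only if $x^*y=yx$.
   Context: Throughout, $R$ is a commutative ring with unity with $\operatorname{char}(R)\neq 2$, and $\mathcal{U}(R)$ is its unit group. $G$ is a group with an involution $*$, i.e. a map $x\mapsto x^*$ with $(xy)^*=y^*x^*$ and $(x^* )^*=x$. The map $\sigma:G\to\mathcal{U}(R)$ is a nontrivial group homomorphism with kernel $N=\ker\sigma$, and it is compatible with $*$: $xx^*\in N$ for all $x\in G$. The group ring $RG$ carries the involution $\left(\sum_{x\in G}\alpha_x x\right)^{\sigma*}=\sum_{x\in G}\sigma(x)\alpha_x x^*$. Write $G_*=\{x\in G: x^*=x\}$ and $N_*=G_*\cap N$. Let $\mathcal{S}$ be the $R$-submodule of $RG$ spanned by the union of the following three sets: - $2\mathcal{S}_1=\{2x: x\in N_*\}$; - $\mathcal{S}_2=\{\alpha x: x\in G_*\setminus N,\ \alpha\in R,\ \alpha(1-\sigma(x))=0\}$; - $\mathcal{S}_3=\{x+\sigma(x)x^*: x\in G\setminus G_*\}$. $\mathcal{S}$ is called anticommutative if $ab+ba=0$ for all $a,b\in\mathcal{S}$. *)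

theory Defs
  imports "HOL-Algebra.Group"
begin

text \<open>The group ring RG is modelled as functions from the group carrier to R
(value 0 outside the carrier); elements of the spanned submodule have finite support.\<close>

definition gr_basis :: "'g \<Rightarrow> 'r::comm_ring_1 \<Rightarrow> ('g \<Rightarrow> 'r)" where
  "gr_basis x c = (\<lambda>z. if z = x then c else 0)"

definition gr_add :: "('g \<Rightarrow> 'r::comm_ring_1) \<Rightarrow> ('g \<Rightarrow> 'r) \<Rightarrow> ('g \<Rightarrow> 'r)" where
  "gr_add a b = (\<lambda>z. a z + b z)"

definition gr_smult :: "'r::comm_ring_1 \<Rightarrow> ('g \<Rightarrow> 'r) \<Rightarrow> ('g \<Rightarrow> 'r)" where
  "gr_smult c a = (\<lambda>z. c * a z)"

definition gr_mult :: "('g, 'b) monoid_scheme \<Rightarrow> ('g \<Rightarrow> 'r::comm_ring_1) \<Rightarrow> ('g \<Rightarrow> 'r) \<Rightarrow> ('g \<Rightarrow> 'r)" where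
  "gr_mult G a b = (\<lambda>z. if z \<in> carrier G
      then (\<Sum>x\<in>{x \<in> carrier G. a x \<noteq> 0}. a x * b (inv\<^bsub>G\<^esub> x \<otimes>\<^bsub>G\<^esub> z)) else 0)"

definition S_gens :: "('g, 'b) monoid_scheme \<Rightarrow> ('g \<Rightarrow> 'g) \<Rightarrow> ('g \<Rightarrow> 'r::comm_ring_1) \<Rightarrow> ('g \<Rightarrow> 'r) set" where
  "S_gens G star \<sigma> =
     {gr_basis x 2 | x. x \<in> carrier G \<and> star x = x \<and> \<sigma> x = 1}
   \<union> {gr_basis x \<alpha> | x \<alpha>. x \<in> carrier G \<and> star x = x \<and> \<sigma> x \<noteq> 1 \<and> \<alpha> * (1 - \<sigma> x) = 0}
   \<union> {gr_add (gr_basis x 1) (gr_basis (star x) (\<sigma> x)) | x. x \<in> carrier G \<and> star x \<noteq> x}"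

inductive_set S_span :: "('g, 'b) monoid_scheme \<Rightarrow> ('g \<Rightarrow> 'g) \<Rightarrow> ('g \<Rightarrow> 'r::comm_ring_1) \<Rightarrow> ('g \<Rightarrow> 'r) set"
  for G star \<sigma> where
  zero: "(\<lambda>_. 0) \<in> S_span G star \<sigma>"
| gen: "a \<in> S_gens G star \<sigma> \<Longrightarrow> a \<in> S_span G star \<sigma>"
| add: "a \<in> S_span G star \<sigma> \<Longrightarrow> b \<in> S_span G star \<sigma> \<Longrightarrow> gr_add a b \<in> S_span G star \<sigma>"
| smult: "a \<in> S_span G star \<sigma> \<Longrightarrow> gr_smult c a \<in> S_span G star \<sigma>"

definition S_anticomm :: "('g, 'b) monoid_scheme \<Rightarrow> ('g \<Rightarrow> 'g) \<Rightarrow> ('g \<Rightarrow> 'r::comm_ring_1) \<Rightarrow> bool" where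
  "S_anticomm G star \<sigma> \<longleftrightarrow>
     (\<forall>a\<in>S_span G star \<sigma>. \<forall>b\<in>S_span G star \<sigma>.
        gr_add (gr_mult G a b) (gr_mult G b a) = (\<lambda>_. 0))"

end

theory Submission
  imports Defs
begin

text \<open>Everything is read off from anticommutators evaluated at a single group element.
For non-symmetric \<open>u\<close>, \<open>v\<close> the anticommutator of \<open>u + \<sigma>(u) u\<^sup>*\<close> and \<open>v + \<sigma>(v) v\<^sup>*\<close>
is a combination of the eight products \<open>uv, uv\<^sup>*, u\<^sup>*v, \<dots>, v\<^sup>*u\<^sup>*\<close> with unit coefficients,
so its vanishing at \<open>uv\<close> forces \<open>uv\<close> to coincide with some of the other seven. Anticommuting
\<open>2z\<close> (for a suitable symmetric \<open>z\<close>) with \<open>u + \<sigma>(u) u\<^sup>*\<close> gives \<open>4 = 0\<close> for \<open>z = 1\<close>, and in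
general that \<open>u\<close> commutes with \<open>z\<close> up to replacing \<open>u\<close> by \<open>u\<^sup>*\<close>. If \<open>uv\<close> equals none
of \<open>vu, vu\<^sup>*, v\<^sup>*u, u\<^sup>*v\<^sup>*\<close>, then \<open>uv = v\<^sup>*u\<^sup>*\<close> is symmetric with \<open>\<sigma>(uv) = -1\<close>, so \<open>2uv \<in> S\<close>,
which is impossible; the other two parts follow from the same evaluations together with
\<open>2 \<noteq> 0\<close> and the invertibility of \<open>\<sigma>\<close>.\<close>

context group begin

lemma gr_mult_eq_sum:
  assumes "finite T" "T \<subseteq> carrier G" "\<And>z. z \<in> carrier G \<Longrightarrow> a z \<noteq> 0 \<Longrightarrow> z \<in> T"
    and "p \<in> carrier G"
  shows "gr_mult G a b p = (\<Sum>x\<in>T. a x * b (inv x \<otimes> p))"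
proof -
  have "(\<Sum>x\<in>{x \<in> carrier G. a x \<noteq> 0}. a x * b (inv x \<otimes> p)) = (\<Sum>x\<in>T. a x * b (inv x \<otimes> p))"
    by (rule sum.mono_neutral_left) (use assms in auto)
  then show ?thesis
    using assms(4) by (simp add: gr_mult_def)
qed

lemma gr_mult_add_right: "gr_mult G a (gr_add b c) = gr_add (gr_mult G a b) (gr_mult G a c)"
  by (auto simp: gr_mult_def gr_add_def distrib_left sum.distrib)

lemma gr_mult_add_left:
  assumes "finite {x \<in> carrier G. a x \<noteq> 0}" and "finite {x \<in> carrier G. b x \<noteq> 0}"
  shows "gr_mult G (gr_add a b) c = gr_add (gr_mult G a c) (gr_mult G b c)"
proof
  fix p
  define T where "T = {x \<in> carrier G. a x \<noteq> 0} \<union> {x \<in> carrier G. b x \<noteq> 0}"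
  have T: "finite T" "T \<subseteq> carrier G" using assms by (auto simp: T_def)
  show "gr_mult G (gr_add a b) c p = gr_add (gr_mult G a c) (gr_mult G b c) p"
  proof (cases "p \<in> carrier G")
    case True
    have "gr_mult G (gr_add a b) c p = (\<Sum>x\<in>T. (a x + b x) * c (inv x \<otimes> p))"
      using T True by (subst gr_mult_eq_sum[OF T]) (auto simp: T_def gr_add_def)
    also have "\<dots> = (\<Sum>x\<in>T. a x * c (inv x \<otimes> p)) + (\<Sum>x\<in>T. b x * c (inv x \<otimes> p))"
      by (simp add: distrib_right sum.distrib)
    also have "\<dots> = gr_mult G a c p + gr_mult G b c p"
      by (subst (1 2) gr_mult_eq_sum[OF T]) (use True in \<open>auto simp: T_def\<close>)
    finally show ?thesis
      by (simp add: gr_add_def)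
  qed (simp add: gr_mult_def gr_add_def)
qed

lemma finite_support_gr_basis: "finite {x \<in> carrier G. gr_basis u c x \<noteq> 0}"
  by (rule finite_subset[of _ "{u}"]) (auto simp: gr_basis_def)

lemma gr_mult_basis:
  assumes "u \<in> carrier G" and "v \<in> carrier G"
  shows "gr_mult G (gr_basis u c) (gr_basis v d) = gr_basis (u \<otimes> v) (c * d)"
proof
  fix p
  show "gr_mult G (gr_basis u c) (gr_basis v d) p = gr_basis (u \<otimes> v) (c * d) p"
  proof (cases "p \<in> carrier G")
    case True
    then have "gr_mult G (gr_basis u c) (gr_basis v d) p = c * gr_basis v d (inv u \<otimes> p)"
      using assms by (subst gr_mult_eq_sum[of "{u}"]) (auto simp: gr_basis_def split: if_splits)
    also have "\<dots> = gr_basis (u \<otimes> v) (c * d) p"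
      using assms True by (auto simp: gr_basis_def inv_solve_left')
    finally show ?thesis .
  qed (use assms in \<open>auto simp: gr_mult_def gr_basis_def\<close>)
qed

lemma gr_mult_binomial_basis:
  assumes "u \<in> carrier G" "u' \<in> carrier G" "v \<in> carrier G" "v' \<in> carrier G"
  shows "gr_mult G (gr_add (gr_basis u c) (gr_basis u' c')) (gr_add (gr_basis v d) (gr_basis v' d'))
    = gr_add (gr_add (gr_basis (u \<otimes> v) (c * d)) (gr_basis (u \<otimes> v') (c * d')))
        (gr_add (gr_basis (u' \<otimes> v) (c' * d)) (gr_basis (u' \<otimes> v') (c' * d')))"
  using assms by (simp add: gr_mult_add_left finite_support_gr_basis)
    (simp add: gr_mult_add_right gr_mult_basis)

end

locale anticommutative_S = group G for G (structure) +
  fixes star :: "'a \<Rightarrow> 'a" and \<sigma> :: "'a \<Rightarrow> 'r::comm_ring_1"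
  assumes two_nonzero: "(2::'r) \<noteq> 0"
    and star_closed [simp]: "u \<in> carrier G \<Longrightarrow> star u \<in> carrier G"
    and star_mult: "u \<in> carrier G \<Longrightarrow> v \<in> carrier G \<Longrightarrow> star (u \<otimes> v) = star v \<otimes> star u"
    and star_star [simp]: "u \<in> carrier G \<Longrightarrow> star (star u) = u"
    and \<sigma>_unit: "u \<in> carrier G \<Longrightarrow> \<sigma> u dvd 1"
    and \<sigma>_mult: "u \<in> carrier G \<Longrightarrow> v \<in> carrier G \<Longrightarrow> \<sigma> (u \<otimes> v) = \<sigma> u * \<sigma> v"
    and \<sigma>_mult_star: "u \<in> carrier G \<Longrightarrow> \<sigma> (u \<otimes> star u) = 1"
    and anticomm: "S_anticomm G star \<sigma>"
begin

abbreviation S where "S \<equiv> S_span G star \<sigma>"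

lemma coeff_one_nonzero: "(1::'r) \<noteq> 0"
  using two_nonzero by auto

lemma \<sigma>_nonzero [simp]: "u \<in> carrier G \<Longrightarrow> \<sigma> u \<noteq> 0"
  using \<sigma>_unit coeff_one_nonzero by fastforce

lemma \<sigma>_mult_left_cancel:
  assumes "u \<in> carrier G" and "\<sigma> u * a = \<sigma> u * b"
  shows "a = b"
proof -
  obtain k where "1 = \<sigma> u * k"
    using \<sigma>_unit[OF assms(1)] by (rule dvdE)
  then show ?thesis
    using arg_cong[OF assms(2), of "(*) k"] by (simp add: algebra_simps)
qed

lemma \<sigma>_one: "\<sigma> \<one> = 1"
  using \<sigma>_mult_left_cancel[of \<one> "\<sigma> \<one>" 1] \<sigma>_mult[of \<one> \<one>] by simp

lemma star_one: "star \<one> = \<one>"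
  using star_mult[of "star \<one>" \<one>] by simp

lemma \<sigma>_star: "u \<in> carrier G \<Longrightarrow> \<sigma> u * \<sigma> (star u) = 1"
  using \<sigma>_mult_star \<sigma>_mult by simp

lemma \<sigma>_star_eq_if_twisted:
  assumes "u \<in> carrier G" "v \<in> carrier G" and "u \<otimes> v = v \<otimes> star u"
  shows "\<sigma> (star u) = \<sigma> u"
proof -
  have "\<sigma> v * \<sigma> u = \<sigma> v * \<sigma> (star u)"
    using arg_cong[OF assms(3), of \<sigma>] assms by (metis \<sigma>_mult star_closed mult.commute)
  then show ?thesis
    by (rule \<sigma>_mult_left_cancel[OF assms(2), THEN sym])
qed

definition S3_gen :: "'a \<Rightarrow> 'a \<Rightarrow> 'r" where
  "S3_gen u = gr_add (gr_basis u 1) (gr_basis (star u) (\<sigma> u))"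

lemma S3_gen_in_S: "u \<in> carrier G \<Longrightarrow> star u \<noteq> u \<Longrightarrow> S3_gen u \<in> S"
  unfolding S3_gen_def by (rule S_span.gen) (auto simp: S_gens_def)

lemma double_in_S:
  assumes "z \<in> carrier G" "star z = z" and "\<sigma> z = 1 \<or> 2 * (1 - \<sigma> z) = 0"
  shows "gr_basis z 2 \<in> S"
proof (rule S_span.gen, cases "\<sigma> z = 1")
  case False
  with assms have "\<exists>x \<alpha>. gr_basis z 2 = gr_basis x \<alpha> \<and> x \<in> carrier G \<and> star x = x
      \<and> \<sigma> x \<noteq> 1 \<and> \<alpha> * (1 - \<sigma> x) = 0"
    by blast
  then show "gr_basis z 2 \<in> S_gens G star \<sigma>"
    unfolding S_gens_def by blast
qed (use assms in \<open>auto simp: S_gens_def\<close>)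

lemma anticomm_at:
  assumes "a \<in> S" "b \<in> S"
  shows "gr_mult G a b p + gr_mult G b a p = 0"
  using anticomm assms unfolding S_anticomm_def gr_add_def by metis

lemma S3_gen_anticomm_at:
  assumes "u \<in> carrier G" "star u \<noteq> u" "v \<in> carrier G" "star v \<noteq> v"
  shows "(if p = u \<otimes> v then 1 else 0) + (if p = u \<otimes> star v then \<sigma> v else 0)
     + (if p = star u \<otimes> v then \<sigma> u else 0) + (if p = star u \<otimes> star v then \<sigma> u * \<sigma> v else 0)
     + (if p = v \<otimes> u then 1 else 0) + (if p = v \<otimes> star u then \<sigma> u else 0)
     + (if p = star v \<otimes> u then \<sigma> v else 0) + (if p = star v \<otimes> star u then \<sigma> v * \<sigma> u else 0) = 0"
  using anticomm_at[OF S3_gen_in_S[OF assms(1,2)] S3_gen_in_S[OF assms(3,4)], of p] assms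
  by (simp only: S3_gen_def gr_mult_binomial_basis star_closed)
    (simp add: gr_add_def gr_basis_def ac_simps cong: if_cong split del: if_split)

lemma double_S3_gen_anticomm_at:
  assumes "z \<in> carrier G" "gr_basis z 2 \<in> S" and "u \<in> carrier G" "star u \<noteq> u"
  shows "(if p = z \<otimes> u then 2 else 0) + (if p = z \<otimes> star u then 2 * \<sigma> u else 0)
     + (if p = u \<otimes> z then 2 else 0) + (if p = star u \<otimes> z then \<sigma> u * 2 else 0) = 0"
  using anticomm_at[OF assms(2) S3_gen_in_S[OF assms(3,4)], of p] assms
  by (simp only: S3_gen_def gr_mult_add_left gr_mult_add_right finite_support_gr_basis
      gr_mult_basis star_closed)
    (simp add: gr_add_def gr_basis_def ac_simps cong: if_cong split del: if_split)

lemma four_eq_zero: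
  assumes "u \<in> carrier G" "star u \<noteq> u"
  shows "(4::'r) = 0"
proof -
  have "gr_basis \<one> 2 \<in> S"
    by (rule double_in_S) (simp_all add: star_one \<sigma>_one)
  from double_S3_gen_anticomm_at[OF one_closed this assms, of u] show ?thesis
    using assms by simp
qed

lemma commutes_or_twisted_if_double:
  assumes "u \<in> carrier G" "star u \<noteq> u" and "z \<in> carrier G" "gr_basis z 2 \<in> S"
  shows "u \<otimes> z = z \<otimes> u \<or> u \<otimes> z = z \<otimes> star u"
proof (rule ccontr)
  assume "\<not> ?thesis"
  with double_S3_gen_anticomm_at[OF assms(3,4,1,2), of "u \<otimes> z"] have "(2::'r) = 0"
    using assms by auto
  with two_nonzero show False ..
qed

lemma mult_cases:
  assumes u: "u \<in> carrier G" "star u \<noteq> u" and v: "v \<in> carrier G" "star v \<noteq> v"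
  shows "u \<otimes> v \<in> {v \<otimes> u, v \<otimes> star u, star v \<otimes> u, star u \<otimes> star v}"
proof (rule ccontr)
  assume n: "u \<otimes> v \<notin> {v \<otimes> u, v \<otimes> star u, star v \<otimes> u, star u \<otimes> star v}"
  have coeff: "1 + (if u \<otimes> v = star v \<otimes> star u then \<sigma> v * \<sigma> u else 0) = 0"
    using S3_gen_anticomm_at[OF u v, of "u \<otimes> v"] n u v by (simp add: eq_commute[of v])
  then have fixed: "u \<otimes> v = star v \<otimes> star u"
    using coeff_one_nonzero by (auto split: if_splits)
  with coeff have "\<sigma> v * \<sigma> u = -1"
    by (simp add: eq_neg_iff_add_eq_0 add.commute)
  then have "2 * (1 - \<sigma> (u \<otimes> v)) = 0"
    using four_eq_zero[OF u] u v by (simp add: \<sigma>_mult mult.commute)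
  then have "gr_basis (u \<otimes> v) 2 \<in> S"
    using fixed u v by (intro double_in_S) (simp_all add: star_mult)
  from commutes_or_twisted_if_double[OF u m_closed[OF u(1) v(1)] this]
  have "u \<otimes> v = v \<otimes> u \<or> u \<otimes> v = v \<otimes> star u"
    using u v by (simp add: m_assoc)
  with n show False by blast
qed

lemma commute_iff_star_fixed:
  assumes u: "u \<in> carrier G" "star u \<noteq> u" and v: "v \<in> carrier G" "star v \<noteq> v"
  shows "u \<otimes> v = v \<otimes> u \<longleftrightarrow> star (u \<otimes> v) = u \<otimes> v"
proof
  assume c: "u \<otimes> v = v \<otimes> u"
  show "star (u \<otimes> v) = u \<otimes> v"
  proof (rule ccontr)
    assume "star (u \<otimes> v) \<noteq> u \<otimes> v"
    then have "star v \<otimes> star u \<noteq> u \<otimes> v" "star u \<otimes> star v \<noteq> u \<otimes> v"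
      using c u v by (metis star_mult)+
    moreover have "u \<otimes> v \<noteq> v \<otimes> star u" "u \<otimes> v \<noteq> star v \<otimes> u"
      using c u v by (metis Units_eq Units_l_cancel right_cancel star_closed)+
    ultimately have "(1::'r) + 1 = 0"
      using S3_gen_anticomm_at[OF u v, of "u \<otimes> v"] eqTrueI[OF c] u v by (simp add: eq_commute[of v])
    with two_nonzero show False by simp
  qed
next
  assume "star (u \<otimes> v) = u \<otimes> v"
  then have fixed: "star v \<otimes> star u = u \<otimes> v"
    using u v by (simp add: star_mult)
  show "u \<otimes> v = v \<otimes> u"
  proof (rule ccontr)
    assume n: "u \<otimes> v \<noteq> v \<otimes> u"
    have ne: "u \<otimes> v \<noteq> v \<otimes> star u" "u \<otimes> v \<noteq> star v \<otimes> u"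
      using fixed u v by (metis Units_eq Units_l_cancel right_cancel star_closed)+
    with n mult_cases[OF u v] have twisted: "u \<otimes> v = star u \<otimes> star v"
      by blast
    have "1 + 2 * (\<sigma> u * \<sigma> v) = 0"
      using S3_gen_anticomm_at[OF u v, of "u \<otimes> v"] eqTrueI[OF twisted] eqTrueI[OF fixed[symmetric]]
        n ne u v
      by (simp add: eq_commute[of v] algebra_simps)
    moreover have "(2::'r) = 2 * (1 + 2 * (\<sigma> u * \<sigma> v))"
      using four_eq_zero[OF u] by (simp add: algebra_simps)
    ultimately show False
      using two_nonzero by simp
  qed
qed

lemma twisted_commute_imp_star_commute:
  assumes u: "u \<in> carrier G" "star u \<noteq> u" and v: "v \<in> carrier G" "star v \<noteq> v"
    and twisted: "u \<otimes> v = v \<otimes> star u"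
  shows "star u \<otimes> v = v \<otimes> u"
proof (rule ccontr)
  assume n: "star u \<otimes> v \<noteq> v \<otimes> u"
  have vu_ne_uv: "v \<otimes> u \<noteq> u \<otimes> v"
    using twisted u v by (metis Units_eq Units_l_cancel star_closed)
  have twisted_star: "star v \<otimes> star u = u \<otimes> star v"
    using arg_cong[OF twisted, of star] u v by (simp add: star_mult)
  have "star u \<otimes> v \<noteq> v \<otimes> star u"
    using twisted u v by (metis right_cancel star_closed)
  then have swap: "star u \<otimes> v = u \<otimes> star v"
    using mult_cases[of "star u" v] n twisted_star u v by auto
  have vu_ne: "v \<otimes> u \<noteq> u \<otimes> star v" "v \<otimes> u \<noteq> star v \<otimes> star u"
    using n swap twisted_star by auto
  have "1 + (if v \<otimes> u = star u \<otimes> star v then \<sigma> u * \<sigma> v else 0) = 0"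
    using S3_gen_anticomm_at[OF u v, of "v \<otimes> u"] vu_ne_uv vu_ne n u v
    by (simp add: eq_commute[of u] eq_commute[of v] ac_simps)
  then have vu: "v \<otimes> u = star u \<otimes> star v" and \<sigma>_prod: "1 + \<sigma> u * \<sigma> v = 0"
    using coeff_one_nonzero by (auto split: if_splits)
  have "star v \<otimes> u = u \<otimes> v"
  proof (rule ccontr)
    assume "star v \<otimes> u \<noteq> u \<otimes> v"
    moreover have "star v \<otimes> u \<noteq> u \<otimes> star v" "star v \<otimes> u \<noteq> star u \<otimes> star v"
      using twisted_star vu u v by (metis Units_eq Units_l_cancel right_cancel star_closed)+
    ultimately have "\<sigma> v = 0"
      using S3_gen_anticomm_at[OF u v, of "star v \<otimes> u"] twisted swap u v
      by (simp add: eq_commute[of u] eq_commute[of v])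
    with v show False by simp
  qed
  then have \<sigma>_sum: "1 + \<sigma> u + \<sigma> v = 0"
    using S3_gen_anticomm_at[OF u v, of "u \<otimes> v"] eqTrueI[OF twisted] vu_ne_uv vu twisted_star u v
    by (simp add: eq_commute[of v] ac_simps)
  have \<sigma>_square: "\<sigma> u * \<sigma> u = 1"
    using \<sigma>_star[OF u(1)] \<sigma>_star_eq_if_twisted[OF u(1) v(1) twisted] by simp
  have "\<sigma> u = \<sigma> u + (\<sigma> u * \<sigma> u - 1) + (1 + \<sigma> u * \<sigma> v)"
    using \<sigma>_square \<sigma>_prod by simp
  also have "\<dots> = \<sigma> u * (1 + \<sigma> u + \<sigma> v)"
    by (simp add: algebra_simps)
  finally have "\<sigma> u = 0"
    using \<sigma>_sum by simp
  with u show False by simp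
qed

lemma twisted_commute_iff:
  assumes u: "u \<in> carrier G" "star u \<noteq> u" and v: "v \<in> carrier G" "star v \<noteq> v"
  shows "u \<otimes> v = v \<otimes> star u \<longleftrightarrow> star u \<otimes> v = v \<otimes> u"
proof
  assume "star u \<otimes> v = v \<otimes> u"
  with u have "star u \<otimes> v = v \<otimes> star (star u)"
    by simp
  from twisted_commute_imp_star_commute[OF _ _ v this] u show "u \<otimes> v = v \<otimes> star u"
    by simp
qed (rule twisted_commute_imp_star_commute[OF u v])

end


theorem lemma3p7:
  fixes G :: "('g, 'b) monoid_scheme"
    and star :: "'g \<Rightarrow> 'g"
    and \<sigma> :: "'g \<Rightarrow> 'r::comm_ring_1"
    and x y :: 'g
  assumes grp: "group G"
    and char: "(2::'r) \<noteq> 0"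
    and star_closed: "\<forall>u\<in>carrier G. star u \<in> carrier G"
    and star_mult: "\<forall>u\<in>carrier G. \<forall>v\<in>carrier G. star (u \<otimes>\<^bsub>G\<^esub> v) = star v \<otimes>\<^bsub>G\<^esub> star u"
    and star_star: "\<forall>u\<in>carrier G. star (star u) = u"
    and \<sigma>_unit: "\<forall>u\<in>carrier G. \<sigma> u dvd 1"
    and \<sigma>_hom: "\<forall>u\<in>carrier G. \<forall>v\<in>carrier G. \<sigma> (u \<otimes>\<^bsub>G\<^esub> v) = \<sigma> u * \<sigma> v"
    and \<sigma>_nontriv: "\<exists>u\<in>carrier G. \<sigma> u \<noteq> 1"
    and compat: "\<forall>u\<in>carrier G. \<sigma> (u \<otimes>\<^bsub>G\<^esub> star u) = 1"
    and anti: "S_anticomm G star \<sigma>"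
    and x: "x \<in> carrier G" "star x \<noteq> x"
    and y: "y \<in> carrier G" "star y \<noteq> y"
  shows "x \<otimes>\<^bsub>G\<^esub> y \<in> {y \<otimes>\<^bsub>G\<^esub> x, y \<otimes>\<^bsub>G\<^esub> star x, star y \<otimes>\<^bsub>G\<^esub> x, star x \<otimes>\<^bsub>G\<^esub> star y}
     \<and> (x \<otimes>\<^bsub>G\<^esub> y = y \<otimes>\<^bsub>G\<^esub> x \<longleftrightarrow> star (x \<otimes>\<^bsub>G\<^esub> y) = x \<otimes>\<^bsub>G\<^esub> y)
     \<and> (x \<otimes>\<^bsub>G\<^esub> y = y \<otimes>\<^bsub>G\<^esub> star x \<longleftrightarrow> star x \<otimes>\<^bsub>G\<^esub> y = y \<otimes>\<^bsub>G\<^esub> x)"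
proof -
  interpret anticommutative_S G star \<sigma>
    by (intro anticommutative_S.intro anticommutative_S_axioms.intro grp)
      (use char star_closed star_mult star_star \<sigma>_unit \<sigma>_hom compat anti in auto)
  show ?thesis
    using mult_cases[OF x y] commute_iff_star_fixed[OF x y] twisted_commute_iff[OF x y] by blast
qed

end
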